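(* Let $p\geq 2$ be a prime and let $\mathbf{k}$ be a field of characteristic $p$ (so $\mathbb{F}_p\subseteq\mathbf{k}$). Then the polynomial $\mathcal{I}_p\in\mathbb{F}_p[f,g,\alpha_1,\alpha_2,t]\subseteq \mathbf{k}(f,g,\alpha_1,\alpha_2,t)$ is a simultaneous integral of motion of $T_1$, $T_2$ and $D_t$, i.e. $$T_1(\mathcal{I}_p)=T_2(\mathcal{I}_p)=\mathcal{I}_p,\qquad D_t\mathcal{I}_p=0.$$ Moreover $\mathcal{I}_p$ has total degree $3p$ and bi-degree $(2p,2p)$ in $(f,g)$, and $$\mathcal{I}_p=-f^{2p}g^p+f^pg^{2p}+O(f,g)$$ for a polynomial $O(f,g)\in\mathbb{F}_p[f,g,\alpha_1,\alpha_2,t]$ of degree less than $2p$ in $f$ and degree less than $2p$ in $g$.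
   Context: Let $\mathbf{k}$ be a field of characteristic $p$. On the rational function field $\mathbf{k}(f,g,\alpha_1,\alpha_2,t)$ let $D_t$ be the $\mathbf{k}$-linear derivation with $D_t f=f(2g-f-t)-\alpha_1$, $D_t g=g(2f-g+t)+\alpha_2$, $D_t\alpha_1=D_t\alpha_2=0$, $D_t t=1$ (the fourth Painlevé equation). Let $T_1,T_2$ be the $\mathbf{k}$-linear field automorphisms given by $T_1:(f,g,\alpha_1,\alpha_2,t)\mapsto(\bar f^1,\bar g^1,\alpha_1+1,\alpha_2,t)$ and $T_2:(f,g,\alpha_1,\alpha_2,t)\mapsto(\bar f^2,\bar g^2,\alpha_1,\alpha_2+1,t)$, where $\bar f^1=\frac{(\alpha_1+\alpha_2)f}{\alpha_1-fg}-f+g-t-\frac{\alpha_1}{f}$, $\bar g^1=\frac{(\alpha_2+fg)f}{\alpha_1-fg}$, $\bar g^2=\frac{(\alpha_1+\alpha_2)g}{\alpha_2+fg}+f-g+t+\frac{\alpha_2}{g}$, $\bar f^2=\frac{(\alpha_1-fg)g}{\alpha_2+fg}$ (the difference second Painlevé equation). Define the $2\times2$ matrix polynomial in $z$ with coefficients in $\mathbb{Z}[f,g,\alpha_1,\alpha_2,t,w,w^{-1}]$: $$A(z)=\begin{bmatrix}w&0\\0&1\end{bmatrix}\begin{bmatrix}1&0\\ f-tfg-tz&1\end{bmatrix}\begin{bmatrix}g&1\\ z+\alpha_2&0\end{bmatrix}\begin{bmatrix}-f&1\\ z&0\end{bmatrix}\begin{bmatrix}tz-g+tfg&1\\ z-\alpha_1&0\end{bmatrix}\begin{bmatrix}w^{-1}&0\\0&1\end{bmatrix}.$$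 Define $\mathcal{I}_p:=\operatorname{Tr}[A(p-1)A(p-2)\cdots A(1)A(0)]$ computed in characteristic $p$; it is an element of $\mathbb{F}_p[f,g,\alpha_1,\alpha_2,t]$ (independent of $w$). *)

theory Defs
  imports "HOL-Library.Poly_Mapping" "HOL-Computational_Algebra.Fraction_Field" "HOL-Computational_Algebra.Primes"
begin

type_synonym 'a mpoly = "(nat \<Rightarrow>\<^sub>0 nat) \<Rightarrow>\<^sub>0 'a"

definition Var :: "nat \<Rightarrow> 'a::comm_ring_1 mpoly" where
  "Var i = Poly_Mapping.single (Poly_Mapping.single i 1) 1"

definition Const :: "'a::comm_ring_1 \<Rightarrow> 'a mpoly" where
  "Const c = Poly_Mapping.single 0 c"

abbreviation "vf \<equiv> Var 0"
abbreviation "vg \<equiv> Var 1"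
abbreviation "va1 \<equiv> Var 2"
abbreviation "va2 \<equiv> Var 3"
abbreviation "vt \<equiv> Var 4"

definition mpeval :: "('a::comm_ring_1 \<Rightarrow> 'r::comm_ring_1) \<Rightarrow> (nat \<Rightarrow> 'r) \<Rightarrow> 'a mpoly \<Rightarrow> 'r" where
  "mpeval phi v P = (\<Sum>m\<in>Poly_Mapping.keys P.
      phi (Poly_Mapping.lookup P m) * (\<Prod>i\<in>Poly_Mapping.keys m. v i ^ Poly_Mapping.lookup m i))"

definition RF :: "'a::field mpoly \<Rightarrow> 'a mpoly fract" where
  "RF P = Fract P 1"

definition pdiff :: "nat \<Rightarrow> 'a::comm_ring_1 mpoly \<Rightarrow> 'a mpoly" where
  "pdiff i P = (\<Sum>m\<in>Poly_Mapping.keys P.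
      Poly_Mapping.single (m - Poly_Mapping.single i 1)
        (of_nat (Poly_Mapping.lookup m i) * Poly_Mapping.lookup P m))"

definition vdeg :: "nat \<Rightarrow> 'a::zero mpoly \<Rightarrow> nat" where
  "vdeg i P = Max (insert 0 ((\<lambda>m. Poly_Mapping.lookup m i) ` Poly_Mapping.keys P))"

definition tdeg :: "'a::zero mpoly \<Rightarrow> nat" where
  "tdeg P = Max (insert 0 ((\<lambda>m. \<Sum>i\<in>Poly_Mapping.keys m. Poly_Mapping.lookup m i)
                            ` Poly_Mapping.keys P))"

text \<open>Coefficients in the prime field F_p (image of the integers).\<close>
definition prime_field_coeffs :: "'a::comm_ring_1 mpoly \<Rightarrow> bool" where
  "prime_field_coeffs P \<longleftrightarrow> (\<forall>m. Poly_Mapping.lookup P m \<in> range of_int)"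

definition Dt :: "'a::comm_ring_1 mpoly \<Rightarrow> 'a mpoly" where
  "Dt P = pdiff 0 P * (vf * (2 * vg - vf - vt) - va1)
        + pdiff 1 P * (vg * (2 * vf - vg + vt) + va2)
        + pdiff 4 P"

definition fbar1 :: "'a::field mpoly fract" where
  "fbar1 = (let f = RF vf; g = RF vg; a1 = RF va1; a2 = RF va2; t = RF vt in
     (a1 + a2) * f / (a1 - f * g) - f + g - t - a1 / f)"

definition gbar1 :: "'a::field mpoly fract" where
  "gbar1 = (let f = RF vf; g = RF vg; a1 = RF va1; a2 = RF va2 in
     (a2 + f * g) * f / (a1 - f * g))"

definition gbar2 :: "'a::field mpoly fract" where
  "gbar2 = (let f = RF vf; g = RF vg; a1 = RF va1; a2 = RF va2; t = RF vt in
     (a1 + a2) * g / (a2 + f * g) + f - g + t + a2 / g)"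

definition fbar2 :: "'a::field mpoly fract" where
  "fbar2 = (let f = RF vf; g = RF vg; a1 = RF va1; a2 = RF va2 in
     (a1 - f * g) * g / (a2 + f * g))"

text \<open>T_1 and T_2 applied to a polynomial P (as an element of the rational function field):
  the field automorphism is determined by its values on the generators.\<close>
definition T1 :: "'a::field mpoly \<Rightarrow> 'a mpoly fract" where
  "T1 P = mpeval (\<lambda>c. RF (Const c))
     (\<lambda>i. if i = 0 then fbar1 else if i = 1 then gbar1
          else if i = 2 then RF va1 + 1 else RF (Var i)) P"

definition T2 :: "'a::field mpoly \<Rightarrow> 'a mpoly fract" where
  "T2 P = mpeval (\<lambda>c. RF (Const c))
     (\<lambda>i. if i = 0 then fbar2 else if i = 1 then gbar2
          else if i = 3 then RF va2 + 1 else RF (Var i)) P"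

text \<open>2x2 matrices as tuples (a11, a12, a21, a22).\<close>
type_synonym 'a mat2 = "'a \<times> 'a \<times> 'a \<times> 'a"

fun m2mul :: "'a::comm_ring_1 mat2 \<Rightarrow> 'a mat2 \<Rightarrow> 'a mat2" where
  "m2mul (a, b, c, d) (e, f, g, h) = (a*e + b*g, a*f + b*h, c*e + d*g, c*f + d*h)"

definition m2one :: "'a::comm_ring_1 mat2" where
  "m2one = (1, 0, 0, 1)"

fun m2tr :: "'a::comm_ring_1 mat2 \<Rightarrow> 'a" where
  "m2tr (a, b, c, d) = a + d"

text \<open>A(z) with entries in a commutative ring; w and wi stand for w and w^(-1).\<close>
definition Amat :: "'a::comm_ring_1 \<Rightarrow> 'a \<Rightarrow> 'a \<Rightarrow> 'a \<Rightarrow> 'a \<Rightarrow> 'a \<Rightarrow> 'a \<Rightarrow> 'a \<Rightarrow> 'a mat2" where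
  "Amat w wi f g a1 a2 t z =
     m2mul (w, 0, 0, 1)
     (m2mul (1, 0, f - t*f*g - t*z, 1)
     (m2mul (g, 1, z + a2, 0)
     (m2mul (-f, 1, z, 0)
     (m2mul (t*z - g + t*f*g, 1, z - a1, 0)
            (wi, 0, 0, 1)))))"

fun prodA :: "'a::comm_ring_1 \<Rightarrow> 'a \<Rightarrow> 'a \<Rightarrow> 'a \<Rightarrow> 'a \<Rightarrow> 'a \<Rightarrow> 'a \<Rightarrow> nat \<Rightarrow> 'a mat2" where
  "prodA w wi f g a1 a2 t 0 = m2one"
| "prodA w wi f g a1 a2 t (Suc n) =
     m2mul (Amat w wi f g a1 a2 t (of_nat n)) (prodA w wi f g a1 a2 t n)"

text \<open>I_p = Tr[A(p-1) ... A(0)], computed in the polynomial ring over a field of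
  characteristic p. Since it is independent of w (conjugation by diag(w,1)), we take w = 1.\<close>
definition Ip :: "nat \<Rightarrow> 'a::field mpoly" where
  "Ip p = m2tr (prodA 1 1 vf vg va1 va2 vt p)"

end

theory Submission
  imports Defs
begin

text \<open>A gauge transformation of \<open>A(z)\<close> by unipotent lower triangular matrices gives a matrix
  \<open>A'(z)\<close> with the same monodromy trace, on which the three flows act by Lax equations:
  \<open>T\<^sub>i(A'(z)) R\<^sub>i(z) = R\<^sub>i(z+1) A'(z)\<close> (for \<open>T\<^sub>1\<close> with \<open>z\<close> shifted by one on the right) and
  \<open>D\<^sub>t A'(z) = B(z+1) A'(z) - A'(z) B(z)\<close>. Multiplying over \<open>z = 0, \<dots>, p-1\<close> and using \<open>z + p = z\<close>
  in characteristic \<open>p\<close>, the \<open>T\<^sub>i\<close> conjugate the product by \<open>R\<^sub>i(0)\<close> and \<open>D\<^sub>t\<close> maps it to a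
  commutator, so its trace \<open>I\<^sub>p\<close> is invariant.

  For the degrees: in each of the gradings by total degree, by degree in \<open>f\<close> and by degree in \<open>g\<close>,
  the top-weight part of \<open>A'(z)\<close> sits in its (1,1) entry, and this shape survives multiplication.
  Hence the top part of \<open>I\<^sub>p\<close> is the \<open>p\<close>-th power of that entry's top part, namely
  \<open>(fg\<^sup>2 - f\<^sup>2g - fgt)\<^sup>p\<close>, \<open>(-f\<^sup>2g)\<^sup>p = -f\<^sup>2\<^sup>pg\<^sup>p\<close> (as \<open>(-1)\<^sup>p = -1\<close> in characteristic \<open>p\<close>, also
  for \<open>p = 2\<close>) and \<open>(fg\<^sup>2)\<^sup>p\<close>.\<close>

section \<open>Products of 2x2 matrices\<close>

lemma m2mul_assoc: "m2mul (m2mul X Y) Z = m2mul X (m2mul Y Z)"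
  by (cases X; cases Y; cases Z) (simp add: algebra_simps)

lemma m2mul_one_left [simp]: "m2mul m2one X = X"
  and m2mul_one_right [simp]: "m2mul X m2one = X"
  by (cases X, simp add: m2one_def)+

lemma m2tr_m2mul_commute: "m2tr (m2mul X Y) = m2tr (m2mul Y X)"
  by (cases X; cases Y) (simp add: algebra_simps)

fun m2det :: "'a::comm_ring_1 mat2 \<Rightarrow> 'a" where
  "m2det (a, b, c, d) = a * d - b * c"

lemma m2tr_eq_if_intertwined:
  fixes X Y R :: "'a::idom mat2"
  assumes "m2mul X R = m2mul R Y" and "m2det R \<noteq> 0"
  shows "m2tr X = m2tr Y"
proof -
  obtain x1 x2 x3 x4 y1 y2 y3 y4 a b c d
    where X: "X = (x1, x2, x3, x4)" and Y: "Y = (y1, y2, y3, y4)" and R: "R = (a, b, c, d)"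
    by (metis prod.exhaust)
  have "x1 * a + x2 * c = a * y1 + b * y3" "x1 * b + x2 * d = a * y2 + b * y4"
    "x3 * a + x4 * c = c * y1 + d * y3" "x3 * b + x4 * d = c * y2 + d * y4"
    using assms(1) by (simp_all add: X Y R)
  then have "(a * d - b * c) * (x1 + x4) = (a * d - b * c) * (y1 + y4)"
    by algebra
  then show ?thesis
    using assms(2) by (simp add: X Y R)
qed

fun m2prod :: "('a::comm_ring_1 \<Rightarrow> 'a mat2) \<Rightarrow> nat \<Rightarrow> 'a mat2" where
  "m2prod X 0 = m2one"
| "m2prod X (Suc n) = m2mul (X (of_nat n)) (m2prod X n)"

lemma prodA_eq_m2prod: "prodA w wi f g a1 a2 t n = m2prod (Amat w wi f g a1 a2 t) n"
  by (induction n) auto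

lemma m2prod_intertwine:
  assumes "\<And>z. m2mul (X z) (R z) = m2mul (R (z + 1)) (Y z)"
  shows "m2mul (m2prod X n) (R 0) = m2mul (R (of_nat n)) (m2prod Y n)"
proof (induction n)
  case 0
  then show ?case by simp
next
  case (Suc n)
  have "m2mul (m2prod X (Suc n)) (R 0) = m2mul (X (of_nat n)) (m2mul (R (of_nat n)) (m2prod Y n))"
    by (simp add: m2mul_assoc Suc)
  also have "\<dots> = m2mul (R (of_nat (Suc n))) (m2prod Y (Suc n))"
    by (simp add: m2mul_assoc[symmetric] assms add.commute)
  finally show ?case .
qed

text \<open>In characteristic \<open>n\<close> the intertwiner returns to \<open>R 0\<close> after \<open>n\<close> steps, so the two
  products are conjugate.\<close>

lemma m2tr_m2prod_eq_if_intertwined: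
  fixes X Y R :: "'a::idom \<Rightarrow> 'a mat2"
  assumes "\<And>z. m2mul (X z) (R z) = m2mul (R (z + 1)) (Y z)"
    and "of_nat n = (0::'a)" and "m2det (R 0) \<noteq> 0"
  shows "m2tr (m2prod X n) = m2tr (m2prod Y n)"
  using m2prod_intertwine[of X R Y n, OF assms(1)] assms(2,3)
  by (intro m2tr_eq_if_intertwined[of _ "R 0"]) simp_all

lemma m2prod_shift: "m2prod (\<lambda>z. Y (z - 1)) (Suc n) = m2mul (m2prod Y n) (Y (- 1))"
  by (induction n) (simp_all add: m2mul_assoc)

lemma m2tr_m2prod_shift:
  assumes "of_nat n = (0::'a::comm_ring_1)" and "n > 0"
  shows "m2tr (m2prod (\<lambda>z. Y (z - 1)) n) = m2tr (m2prod (Y :: 'a \<Rightarrow> 'a mat2) n)"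
proof -
  obtain k where n: "n = Suc k"
    using assms(2) gr0_implies_Suc by blast
  then have "of_nat k = (- 1 :: 'a)"
    using assms(1) by (simp add: eq_neg_iff_add_eq_0 add.commute)
  then have "m2tr (m2mul (m2prod Y k) (Y (- 1))) = m2tr (m2prod Y n)"
    by (simp add: n m2tr_m2mul_commute)
  then show ?thesis
    by (simp only: n m2prod_shift)
qed

fun m2add :: "'a::comm_ring_1 mat2 \<Rightarrow> 'a mat2 \<Rightarrow> 'a mat2" where
  "m2add (a, b, c, d) (e, f, g, h) = (a + e, b + f, c + g, d + h)"

fun m2sub :: "'a::comm_ring_1 mat2 \<Rightarrow> 'a mat2 \<Rightarrow> 'a mat2" where
  "m2sub (a, b, c, d) (e, f, g, h) = (a - e, b - f, c - g, d - h)"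

fun m2map :: "('a \<Rightarrow> 'b) \<Rightarrow> 'a mat2 \<Rightarrow> 'b mat2" where
  "m2map h (a, b, c, d) = (h a, h b, h c, h d)"

lemma m2tr_commutator: "m2tr (m2sub (m2mul B X) (m2mul X B)) = (0::'a::comm_ring_1)"
  by (cases B; cases X) (simp add: algebra_simps)

section \<open>Derivations and ring homomorphisms\<close>

locale derivation =
  fixes D :: "'a::comm_ring_1 \<Rightarrow> 'a"
  assumes D_add: "D (x + y) = D x + D y"
    and D_mult: "D (x * y) = x * D y + D x * y"
begin

lemma D_zero [simp]: "D 0 = 0"
  using D_add[of 0 0] by simp

lemma D_minus: "D (- x) = - D x"
  using D_add[of x "- x"] by (simp add: eq_neg_iff_add_eq_0 add.commute)

lemma D_diff: "D (x - y) = D x - D y"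
  using D_add[of x "- y"] by (simp add: D_minus)

lemma D_one [simp]: "D 1 = 0"
  using D_mult[of 1 1] by simp

lemma D_of_nat [simp]: "D (of_nat n) = 0"
  by (induction n) (simp_all add: D_add)

lemma D_power2: "D (x ^ 2) = 2 * x * D x"
  by (simp add: power2_eq_square D_mult algebra_simps)

lemma m2map_D_m2mul:
  "m2map D (m2mul X Y) = m2add (m2mul (m2map D X) Y) (m2mul X (m2map D Y))"
  by (cases X; cases Y) (simp add: D_add D_mult algebra_simps)

lemma m2map_D_m2prod:
  fixes X B :: "'a \<Rightarrow> 'a mat2"
  assumes "\<And>k. m2map D (X (of_nat k))
    = m2sub (m2mul (B (of_nat k + 1)) (X (of_nat k))) (m2mul (X (of_nat k)) (B (of_nat k)))"
  shows "m2map D (m2prod X n) = m2sub (m2mul (B (of_nat n)) (m2prod X n)) (m2mul (m2prod X n) (B 0))"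
proof (induction n)
  case 0
  then show ?case by (cases "B 0") (simp add: m2one_def)
next
  case (Suc n)
  let ?X = "X (of_nat n)" and ?P = "m2prod X n"
  have "m2map D (m2prod X (Suc n)) = m2add (m2mul (m2map D ?X) ?P) (m2mul ?X (m2map D ?P))"
    by (simp add: m2map_D_m2mul)
  also have "\<dots> = m2sub (m2mul (B (of_nat n + 1)) (m2mul ?X ?P)) (m2mul (m2mul ?X ?P) (B 0))"
    unfolding assms Suc
    by (cases ?X; cases ?P; cases "B 0"; cases "B (of_nat n)"; cases "B (of_nat n + 1)")
      (simp add: algebra_simps)
  finally show ?case
    by (simp add: add.commute)
qed

text \<open>Under a Lax equation the derivative of the product over a full period is a commutator,
  hence traceless.\<close>

lemma D_m2tr_m2prod_eq_0:
  fixes X B :: "'a \<Rightarrow> 'a mat2"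
  assumes "\<And>k. m2map D (X (of_nat k))
    = m2sub (m2mul (B (of_nat k + 1)) (X (of_nat k))) (m2mul (X (of_nat k)) (B (of_nat k)))"
    and "of_nat n = (0::'a)"
  shows "D (m2tr (m2prod X n)) = 0"
proof -
  have "D (m2tr (m2prod X n)) = m2tr (m2map D (m2prod X n))"
    by (cases "m2prod X n") (simp add: D_add)
  also have "\<dots> = m2tr (m2sub (m2mul (B 0) (m2prod X n)) (m2mul (m2prod X n) (B 0)))"
    using m2map_D_m2prod[of X B n, OF assms(1)] by (simp only: assms(2))
  also have "\<dots> = 0"
    by (rule m2tr_commutator)
  finally show ?thesis .
qed

end

locale ring_hom =
  fixes h :: "'a::comm_ring_1 \<Rightarrow> 'b::comm_ring_1"
  assumes hom_add: "h (x + y) = h x + h y"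
    and hom_mult: "h (x * y) = h x * h y"
    and hom_one: "h 1 = 1"
begin

lemma hom_zero [simp]: "h 0 = 0"
  using hom_add[of 0 0] by simp

lemma hom_minus: "h (- x) = - h x"
  using hom_add[of x "- x"] by (simp add: eq_neg_iff_add_eq_0 add.commute)

lemma hom_diff: "h (x - y) = h x - h y"
  using hom_add[of x "- y"] by (simp add: hom_minus)

lemma hom_of_nat: "h (of_nat n) = of_nat n"
  by (induction n) (simp_all add: hom_add hom_one)

lemma hom_power: "h (x ^ n) = h x ^ n"
  by (induction n) (simp_all add: hom_one hom_mult)

lemmas hom_simps = hom_add hom_mult hom_one hom_minus hom_diff hom_of_nat hom_power

lemma m2map_m2mul: "m2map h (m2mul X Y) = m2mul (m2map h X) (m2map h Y)"
  by (cases X; cases Y) (simp add: hom_add hom_mult)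

lemma m2tr_m2map: "h (m2tr X) = m2tr (m2map h X)"
  by (cases X) (simp add: hom_add)

lemma m2map_Amat:
  "m2map h (Amat 1 1 f g a1 a2 t (of_nat k)) = Amat 1 1 (h f) (h g) (h a1) (h a2) (h t) (of_nat k)"
  unfolding Amat_def by (simp only: m2map_m2mul m2map.simps hom_simps hom_zero)

lemma hom_m2tr_m2prod_Amat:
  "h (m2tr (m2prod (Amat 1 1 f g a1 a2 t) n))
    = m2tr (m2prod (Amat 1 1 (h f) (h g) (h a1) (h a2) (h t)) n)"
proof -
  have "m2map h (m2prod (Amat 1 1 f g a1 a2 t) n) = m2prod (Amat 1 1 (h f) (h g) (h a1) (h a2) (h t)) n"
    by (induction n) (simp_all add: m2map_m2mul m2map_Amat m2one_def hom_one)
  then show ?thesis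
    by (simp add: m2tr_m2map)
qed

end

section \<open>Polynomials\<close>

lemma poly_mapping_induct_single [case_names zero add]:
  assumes "P 0"
    and "\<And>a b f. a \<notin> Poly_Mapping.keys f \<Longrightarrow> b \<noteq> 0 \<Longrightarrow> P f \<Longrightarrow> P (Poly_Mapping.single a b + f)"
  shows "P f"
proof -
  have upd: "Poly_Mapping.update a b f = Poly_Mapping.single a b + f"
    if "a \<notin> Poly_Mapping.keys f" for a b f
    using that by (intro poly_mapping_eqI) (auto simp: lookup_update lookup_add lookup_single in_keys_iff)
  show ?thesis
    by (induction f rule: update_induct) (simp_all add: assms upd)
qed

lemma biadditive_eq_on_monomials:
  fixes F G :: "('k \<Rightarrow>\<^sub>0 'a::comm_ring_1) \<Rightarrow> ('k \<Rightarrow>\<^sub>0 'a) \<Rightarrow> 'b::ab_group_add"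
  assumes "\<And>Q. F 0 Q = G 0 Q" "\<And>P. F P 0 = G P 0"
    and "\<And>P1 P2 Q. F (P1 + P2) Q = F P1 Q + F P2 Q" "\<And>P1 P2 Q. G (P1 + P2) Q = G P1 Q + G P2 Q"
    and "\<And>P Q1 Q2. F P (Q1 + Q2) = F P Q1 + F P Q2" "\<And>P Q1 Q2. G P (Q1 + Q2) = G P Q1 + G P Q2"
    and "\<And>a b c d. F (Poly_Mapping.single a b) (Poly_Mapping.single c d)
                  = G (Poly_Mapping.single a b) (Poly_Mapping.single c d)"
  shows "F P Q = G P Q"
proof (induction P rule: poly_mapping_induct_single)
  case zero
  then show ?case by (rule assms(1))
next
  case (add a b f)
  have "F (Poly_Mapping.single a b) Q = G (Poly_Mapping.single a b) Q"
    by (induction Q rule: poly_mapping_induct_single) (simp_all add: assms(2,5,6,7))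
  with add show ?case
    by (simp add: assms(3,4))
qed

lemma pdiff_zero [simp]: "pdiff i 0 = 0"
  by (simp add: pdiff_def)

lemma pdiff_add: "pdiff i (P + Q) = pdiff i P + pdiff i Q"
  unfolding pdiff_def by (rule setsum_keys_plus_distrib) (simp_all add: single_add distrib_left)

lemma pdiff_single:
  "pdiff i (Poly_Mapping.single m c)
    = Poly_Mapping.single (m - Poly_Mapping.single i 1) (of_nat (Poly_Mapping.lookup m i) * c)"
  by (cases "c = 0") (simp_all add: pdiff_def)

text \<open>Truncated subtraction of monomials is harmless here: when \<open>x\<^sub>i\<close> does not divide \<open>m\<close> the
  coefficient vanishes.\<close>

lemma single_lowered_mult_single:
  "Poly_Mapping.single (m - Poly_Mapping.single i 1) (of_nat (Poly_Mapping.lookup m i) * c)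
     * Poly_Mapping.single n d
   = Poly_Mapping.single (m + n - Poly_Mapping.single i 1) (of_nat (Poly_Mapping.lookup m i) * c * d)"
proof (cases "Poly_Mapping.lookup m i = 0")
  case False
  then have "m - Poly_Mapping.single i 1 + n = m + n - Poly_Mapping.single i 1"
    by (intro poly_mapping_eqI) (auto simp: lookup_add lookup_minus lookup_single when_def)
  then show ?thesis
    by (simp add: mult_single)
qed simp

lemma pdiff_single_mult_single:
  "pdiff i (Poly_Mapping.single a b * Poly_Mapping.single c d)
    = pdiff i (Poly_Mapping.single a b) * Poly_Mapping.single c d
      + Poly_Mapping.single a b * pdiff i (Poly_Mapping.single c (d::'a::comm_ring_1))"
proof -
  let ?e = "Poly_Mapping.single i (1::nat)"
  have "pdiff i (Poly_Mapping.single a b) * Poly_Mapping.single c d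
      = Poly_Mapping.single (a + c - ?e) (of_nat (Poly_Mapping.lookup a i) * b * d)"
    by (simp only: pdiff_single single_lowered_mult_single)
  moreover have "Poly_Mapping.single a b * pdiff i (Poly_Mapping.single c d)
      = Poly_Mapping.single (a + c - ?e) (of_nat (Poly_Mapping.lookup c i) * d * b)"
    by (simp only: pdiff_single mult.commute[of "Poly_Mapping.single a b"]
        single_lowered_mult_single add.commute[of c])
  ultimately show ?thesis
    by (simp add: pdiff_single mult_single lookup_add single_add[symmetric] algebra_simps)
qed

lemma pdiff_mult: "pdiff i (P * Q) = pdiff i P * Q + P * (pdiff i Q :: 'a::comm_ring_1 mpoly)"
  by (rule biadditive_eq_on_monomials[where F = "\<lambda>P Q. pdiff i (P * Q)"])
    (simp_all add: pdiff_add pdiff_single_mult_single distrib_left distrib_right algebra_simps)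

lemma pdiff_Var: "pdiff i (Var j :: 'a::comm_ring_1 mpoly) = (if i = j then 1 else 0)"
  by (simp add: Var_def pdiff_single lookup_single when_def)

lemma derivation_Dt: "derivation (Dt :: 'a::comm_ring_1 mpoly \<Rightarrow> 'a mpoly)"
  by unfold_locales (simp_all add: Dt_def pdiff_add pdiff_mult algebra_simps)

lemma Dt_Var:
  "Dt (Var i :: 'a::comm_ring_1 mpoly) =
    (if i = 0 then vf * (2 * vg - vf - vt) - va1 else if i = 1 then vg * (2 * vf - vg + vt) + va2
     else if i = 4 then 1 else 0)"
  by (simp add: Dt_def pdiff_Var)

definition monomial_value :: "(nat \<Rightarrow> 'r::comm_ring_1) \<Rightarrow> (nat \<Rightarrow>\<^sub>0 nat) \<Rightarrow> 'r" where
  "monomial_value v m = (\<Prod>i\<in>Poly_Mapping.keys m. v i ^ Poly_Mapping.lookup m i)"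

lemma monomial_value_eq_prod_superset:
  assumes "finite S" "Poly_Mapping.keys m \<subseteq> S"
  shows "monomial_value v m = (\<Prod>i\<in>S. v i ^ Poly_Mapping.lookup m i)"
  unfolding monomial_value_def using assms
  by (intro prod.mono_neutral_left) (auto simp: in_keys_iff)

lemma monomial_value_add: "monomial_value v (a + b) = monomial_value v a * monomial_value v b"
proof -
  let ?S = "Poly_Mapping.keys a \<union> Poly_Mapping.keys b"
  have "monomial_value v (a + b) = (\<Prod>i\<in>?S. v i ^ Poly_Mapping.lookup (a + b) i)"
    by (rule monomial_value_eq_prod_superset) (auto simp: keys_add)
  also have "\<dots> = (\<Prod>i\<in>?S. v i ^ Poly_Mapping.lookup a i) * (\<Prod>i\<in>?S. v i ^ Poly_Mapping.lookup b i)"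
    by (simp add: lookup_add power_add prod.distrib)
  also have "\<dots> = monomial_value v a * monomial_value v b"
    using monomial_value_eq_prod_superset[of ?S a v] monomial_value_eq_prod_superset[of ?S b v]
    by simp
  finally show ?thesis .
qed

lemma monomial_value_zero [simp]: "monomial_value v 0 = 1"
  by (simp add: monomial_value_def)

lemma monomial_value_single: "monomial_value v (Poly_Mapping.single i n) = v i ^ n"
  by (cases "n = 0") (simp_all add: monomial_value_def)

context ring_hom
begin

lemma mpeval_eq: "mpeval h v P = (\<Sum>m\<in>Poly_Mapping.keys P. h (Poly_Mapping.lookup P m) * monomial_value v m)"
  by (simp add: mpeval_def monomial_value_def)

lemma mpeval_add: "mpeval h v (P + Q) = mpeval h v P + mpeval h v Q"
  unfolding mpeval_eq by (rule setsum_keys_plus_distrib) (simp_all add: hom_add distrib_right)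

lemma mpeval_zero [simp]: "mpeval h v 0 = 0"
  by (simp add: mpeval_eq)

lemma mpeval_single: "mpeval h v (Poly_Mapping.single m c) = h c * monomial_value v m"
  by (cases "c = 0") (simp_all add: mpeval_eq)

lemma mpeval_mult: "mpeval h v (P * Q) = mpeval h v P * mpeval h v Q"
  by (rule biadditive_eq_on_monomials[where F = "\<lambda>P Q. mpeval h v (P * Q)"])
    (simp_all add: mpeval_add mpeval_single mult_single monomial_value_add hom_mult distrib_left
      distrib_right mult_ac)

lemma ring_hom_mpeval: "ring_hom (mpeval h v)"
  using mpeval_single[of v 0 1] by unfold_locales (simp_all add: mpeval_add mpeval_mult hom_one)

lemma mpeval_Var: "mpeval h v (Var i) = v i"
  by (simp add: Var_def mpeval_single monomial_value_single hom_one)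

end

lemma ring_hom_id: "ring_hom id"
  by unfold_locales simp_all

interpretation RF: ring_hom "RF :: 'a::field mpoly \<Rightarrow> 'a mpoly fract"
  by unfold_locales (simp_all add: RF_def One_fract_def)

lemma ring_hom_RF_Const: "ring_hom (\<lambda>c. RF (Const c :: 'a::field mpoly))"
  by unfold_locales (simp_all add: RF_def Const_def One_fract_def single_add mult_single)

interpretation eval: ring_hom "mpeval id v"
  by (rule ring_hom.ring_hom_mpeval[OF ring_hom_id])

lemma eval_Var [simp]: "mpeval id v (Var i) = v i"
  by (rule ring_hom.mpeval_Var[OF ring_hom_id])

lemma nonzero_if_eval_nonzero: "mpeval id v P \<noteq> 0 \<Longrightarrow> P \<noteq> 0"
  by auto

lemma RF_nonzero_if_eval_nonzero: "mpeval id v P \<noteq> 0 \<Longrightarrow> RF (P :: 'a::field mpoly) \<noteq> 0"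
  by (auto simp: RF_def Zero_fract_def eq_fract)

lemma prime_field_coeffs_iff_Ints: "prime_field_coeffs P \<longleftrightarrow> (\<forall>m. Poly_Mapping.lookup P m \<in> \<int>)"
  by (simp add: prime_field_coeffs_def Ints_def)

lemma Sum_any_in_Ints: "(\<And>a. f a \<in> \<int>) \<Longrightarrow> Sum_any f \<in> \<int>"
  by (simp add: Sum_any.expand_set Ints_sum)

lemma prime_field_coeffs_add:
  "prime_field_coeffs P \<Longrightarrow> prime_field_coeffs Q \<Longrightarrow> prime_field_coeffs (P + Q)"
  by (simp add: prime_field_coeffs_iff_Ints lookup_add)

lemma prime_field_coeffs_mult:
  "prime_field_coeffs P \<Longrightarrow> prime_field_coeffs Q \<Longrightarrow> prime_field_coeffs (P * Q)"
  unfolding prime_field_coeffs_iff_Ints lookup_mult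
  by (intro allI Sum_any_in_Ints Ints_mult) (simp_all add: when_def)

lemma prime_field_coeffs_uminus: "prime_field_coeffs P \<Longrightarrow> prime_field_coeffs (- P)"
  by (simp add: prime_field_coeffs_iff_Ints)

lemma prime_field_coeffs_diff:
  "prime_field_coeffs P \<Longrightarrow> prime_field_coeffs Q \<Longrightarrow> prime_field_coeffs (P - Q)"
  by (simp add: prime_field_coeffs_iff_Ints lookup_minus)

lemma prime_field_coeffs_of_nat: "prime_field_coeffs (of_nat n :: 'a::comm_ring_1 mpoly)"
  by (simp add: prime_field_coeffs_iff_Ints lookup_of_nat when_def)

lemma prime_field_coeffs_zero: "prime_field_coeffs 0"
  by (simp add: prime_field_coeffs_iff_Ints)

lemma prime_field_coeffs_one: "prime_field_coeffs (1 :: 'a::comm_ring_1 mpoly)"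
  using prime_field_coeffs_of_nat[of 1] by simp

lemma prime_field_coeffs_Var: "prime_field_coeffs (Var i :: 'a::comm_ring_1 mpoly)"
  by (simp add: prime_field_coeffs_iff_Ints Var_def lookup_single when_def)

lemma prime_field_coeffs_power: "prime_field_coeffs P \<Longrightarrow> prime_field_coeffs (P ^ n)"
  by (induction n) (simp_all add: prime_field_coeffs_one prime_field_coeffs_mult)

section \<open>Weighted degrees and leading forms\<close>

definition weight_le :: "((nat \<Rightarrow>\<^sub>0 nat) \<Rightarrow> nat) \<Rightarrow> nat \<Rightarrow> 'a::comm_ring_1 mpoly \<Rightarrow> bool" where
  "weight_le w d P \<longleftrightarrow> (\<forall>m\<in>Poly_Mapping.keys P. w m \<le> d)"

definition weight_less :: "((nat \<Rightarrow>\<^sub>0 nat) \<Rightarrow> nat) \<Rightarrow> nat \<Rightarrow> 'a::comm_ring_1 mpoly \<Rightarrow> bool" where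
  "weight_less w d P \<longleftrightarrow> (\<forall>m\<in>Poly_Mapping.keys P. w m < d)"

definition homogeneous :: "((nat \<Rightarrow>\<^sub>0 nat) \<Rightarrow> nat) \<Rightarrow> nat \<Rightarrow> 'a::comm_ring_1 mpoly \<Rightarrow> bool" where
  "homogeneous w d P \<longleftrightarrow> (\<forall>m\<in>Poly_Mapping.keys P. w m = d)"

definition leading_form ::
    "((nat \<Rightarrow>\<^sub>0 nat) \<Rightarrow> nat) \<Rightarrow> nat \<Rightarrow> 'a::comm_ring_1 mpoly \<Rightarrow> 'a mpoly \<Rightarrow> bool" where
  "leading_form w d P T \<longleftrightarrow> homogeneous w d T \<and> weight_less w d (P - T)"

locale monomial_weight =
  fixes w :: "(nat \<Rightarrow>\<^sub>0 nat) \<Rightarrow> nat"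
  assumes weight_add: "w (a + b) = w a + w b"
begin

lemma weight_zero [simp]: "w 0 = 0"
  using weight_add[of 0 0] by simp

lemma weight_le_add: "weight_le w d P \<Longrightarrow> weight_le w d Q \<Longrightarrow> weight_le w d (P + Q)"
  unfolding weight_le_def using keys_add[of P Q] by blast

lemma weight_less_add: "weight_less w d P \<Longrightarrow> weight_less w d Q \<Longrightarrow> weight_less w d (P + Q)"
  unfolding weight_less_def using keys_add[of P Q] by blast

lemma homogeneous_add: "homogeneous w d P \<Longrightarrow> homogeneous w d Q \<Longrightarrow> homogeneous w d (P + Q)"
  unfolding homogeneous_def using keys_add[of P Q] by blast

lemma weight_le_uminus: "weight_le w d P \<Longrightarrow> weight_le w d (- P)"
  unfolding weight_le_def by simp

lemma weight_less_uminus: "weight_less w d P \<Longrightarrow> weight_less w d (- P)"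
  unfolding weight_less_def by simp

lemma homogeneous_uminus: "homogeneous w d P \<Longrightarrow> homogeneous w d (- P)"
  unfolding homogeneous_def by simp

lemma weight_le_diff: "weight_le w d P \<Longrightarrow> weight_le w d Q \<Longrightarrow> weight_le w d (P - Q)"
  unfolding diff_conv_add_uminus by (intro weight_le_add weight_le_uminus)

lemma weight_less_diff: "weight_less w d P \<Longrightarrow> weight_less w d Q \<Longrightarrow> weight_less w d (P - Q)"
  unfolding diff_conv_add_uminus by (intro weight_less_add weight_less_uminus)

lemma homogeneous_diff: "homogeneous w d P \<Longrightarrow> homogeneous w d Q \<Longrightarrow> homogeneous w d (P - Q)"
  unfolding diff_conv_add_uminus by (intro homogeneous_add homogeneous_uminus)

lemma weight_le_mult: "weight_le w a P \<Longrightarrow> weight_le w b Q \<Longrightarrow> weight_le w (a + b) (P * Q)"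
  unfolding weight_le_def using keys_mult[of P Q] by (force simp: weight_add intro: add_mono)

lemma weight_less_mult_left:
  "weight_less w a P \<Longrightarrow> weight_le w b Q \<Longrightarrow> weight_less w (a + b) (P * Q)"
  unfolding weight_le_def weight_less_def using keys_mult[of P Q]
  by (force simp: weight_add intro: add_less_le_mono)

lemma weight_less_mult_right:
  "weight_le w a P \<Longrightarrow> weight_less w b Q \<Longrightarrow> weight_less w (a + b) (P * Q)"
  unfolding weight_le_def weight_less_def using keys_mult[of P Q]
  by (force simp: weight_add intro: add_le_less_mono)

lemma homogeneous_mult: "homogeneous w a P \<Longrightarrow> homogeneous w b Q \<Longrightarrow> homogeneous w (a + b) (P * Q)"
  unfolding homogeneous_def using keys_mult[of P Q] by (force simp: weight_add)

lemma weight_le_if_homogeneous: "homogeneous w a P \<Longrightarrow> a \<le> d \<Longrightarrow> weight_le w d P"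
  unfolding weight_le_def homogeneous_def by auto

lemma weight_less_if_homogeneous: "homogeneous w a P \<Longrightarrow> a < d \<Longrightarrow> weight_less w d P"
  unfolding weight_less_def homogeneous_def by auto

lemma weight_le_if_weight_less: "weight_less w d P \<Longrightarrow> weight_le w d P"
  unfolding weight_less_def weight_le_def by auto

lemma homogeneous_Var: "homogeneous w (w (Poly_Mapping.single i 1)) (Var i)"
  by (simp add: homogeneous_def Var_def)

lemma homogeneous_of_nat: "homogeneous w 0 (of_nat n)"
  by (simp add: homogeneous_def flip: single_of_nat)

lemma homogeneous_power:
  assumes "homogeneous w a P"
  shows "homogeneous w (n * a) (P ^ n)"
proof (induction n)
  case 0
  then show ?case using homogeneous_of_nat[of 1] by simp
next
  case (Suc n)
  then show ?case using homogeneous_mult[OF assms] by simp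
qed

lemma homogeneous_single: "w m = d \<Longrightarrow> homogeneous w d (Poly_Mapping.single m c)"
  by (simp add: homogeneous_def)

lemma weight_less_single: "w m < d \<Longrightarrow> weight_less w d (Poly_Mapping.single m c)"
  by (simp add: weight_less_def)

lemma weight_le_single: "w m \<le> d \<Longrightarrow> weight_le w d (Poly_Mapping.single m c)"
  by (simp add: weight_le_def)

lemmas weight_intros = weight_less_add weight_less_diff weight_less_uminus weight_le_add
  weight_le_diff weight_le_uminus homogeneous_add homogeneous_diff homogeneous_uminus
  weight_less_single weight_le_single homogeneous_single

lemma leading_formI: "P = R + T \<Longrightarrow> weight_less w d R \<Longrightarrow> homogeneous w d T \<Longrightarrow> leading_form w d P T"
  by (simp add: leading_form_def)

lemma weight_le_if_leading_form: "leading_form w d P T \<Longrightarrow> weight_le w d P"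
  using weight_le_add[of d "P - T" T]
  by (auto simp: leading_form_def intro: weight_le_if_weight_less weight_le_if_homogeneous)

lemma leading_form_add_weight_less:
  "leading_form w d P T \<Longrightarrow> weight_less w d R \<Longrightarrow> leading_form w d (P + R) T"
  using weight_less_add[of d "P - T" R] by (simp add: leading_form_def algebra_simps)

lemma weight_less_remainder:
  "leading_form w d P T \<Longrightarrow> weight_less w d S \<Longrightarrow> weight_less w d (P - T + S)"
  by (simp add: leading_form_def weight_less_add)

lemma leading_form_mult:
  assumes "leading_form w a P S" and "leading_form w b Q T"
  shows "leading_form w (a + b) (P * Q) (S * T)"
proof -
  have "weight_less w (a + b) ((P - S) * Q)"
    using assms by (intro weight_less_mult_left weight_le_if_leading_form) (auto simp: leading_form_def)
  moreover have "weight_less w (a + b) (S * (Q - T))"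
    using assms by (intro weight_less_mult_right weight_le_if_homogeneous) (auto simp: leading_form_def)
  moreover have "P * Q - S * T = (P - S) * Q + S * (Q - T)"
    by (simp add: algebra_simps)
  ultimately show ?thesis
    using assms by (simp add: leading_form_def homogeneous_mult weight_less_add)
qed

lemma Max_weight_eq_if_leading_form:
  assumes "leading_form w d P T" and "T \<noteq> 0"
  shows "Max (insert 0 (w ` Poly_Mapping.keys P)) = d"
proof -
  obtain m where m: "m \<in> Poly_Mapping.keys T"
    using assms(2) by (metis ex_in_conv keys_eq_empty)
  then have "w m = d"
    using assms(1) by (auto simp: leading_form_def homogeneous_def)
  then have "m \<notin> Poly_Mapping.keys (P - T)"
    using assms(1) by (auto simp: leading_form_def weight_less_def)
  with m have "m \<in> Poly_Mapping.keys P"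
    by (simp add: in_keys_iff lookup_minus)
  moreover have "\<forall>m'\<in>Poly_Mapping.keys P. w m' \<le> d"
    using weight_le_if_leading_form[OF assms(1)] by (simp add: weight_le_def)
  ultimately show ?thesis
    using \<open>w m = d\<close> by (intro Max_eqI) auto
qed

lemma Max_weight_less: "weight_less w d P \<Longrightarrow> 0 < d \<Longrightarrow> Max (insert 0 (w ` Poly_Mapping.keys P)) < d"
  by (simp add: weight_less_def)

end

definition monomial_degree :: "(nat \<Rightarrow>\<^sub>0 nat) \<Rightarrow> nat" where
  "monomial_degree m = (\<Sum>i\<in>Poly_Mapping.keys m. Poly_Mapping.lookup m i)"

lemma monomial_degree_eq_sum_superset:
  "finite S \<Longrightarrow> Poly_Mapping.keys m \<subseteq> S \<Longrightarrow> monomial_degree m = (\<Sum>i\<in>S. Poly_Mapping.lookup m i)"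
  unfolding monomial_degree_def by (intro sum.mono_neutral_left) (auto simp: in_keys_iff)

interpretation total_degree: monomial_weight monomial_degree
proof
  fix a b :: "nat \<Rightarrow>\<^sub>0 nat"
  let ?S = "Poly_Mapping.keys a \<union> Poly_Mapping.keys b"
  show "monomial_degree (a + b) = monomial_degree a + monomial_degree b"
    using monomial_degree_eq_sum_superset[of ?S "a + b"] monomial_degree_eq_sum_superset[of ?S a]
      monomial_degree_eq_sum_superset[of ?S b]
    by (simp add: keys_add lookup_add sum.distrib)
qed

lemma monomial_degree_single [simp]: "monomial_degree (Poly_Mapping.single i n) = n"
  by (cases "n = 0") (simp_all add: monomial_degree_def)

interpretation var_degree: monomial_weight "\<lambda>m. Poly_Mapping.lookup m i" for i
  by unfold_locales (simp add: lookup_add)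

text \<open>The (2,1) entry may reach full weight because in products it only meets entries of lower
  weight; this makes the shape stable under multiplication.\<close>

fun leading_corner ::
    "((nat \<Rightarrow>\<^sub>0 nat) \<Rightarrow> nat) \<Rightarrow> nat \<Rightarrow> 'a::comm_ring_1 mpoly \<Rightarrow> 'a mpoly mat2 \<Rightarrow> bool" where
  "leading_corner w c T (x11, x12, x21, x22) \<longleftrightarrow>
     leading_form w c x11 T \<and> weight_less w c x12 \<and> weight_le w c x21 \<and> weight_less w c x22"

context monomial_weight
begin

lemma leading_corner_m2mul:
  assumes "leading_corner w a S X" and "leading_corner w b T Y"
  shows "leading_corner w (a + b) (S * T) (m2mul X Y)"
proof -
  obtain x11 x12 x21 x22 y11 y12 y21 y22
    where X: "X = (x11, x12, x21, x22)" and Y: "Y = (y11, y12, y21, y22)"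
    by (metis prod.exhaust)
  have x: "leading_form w a x11 S" "weight_less w a x12" "weight_le w a x21" "weight_less w a x22"
    and y: "leading_form w b y11 T" "weight_less w b y12" "weight_le w b y21" "weight_less w b y22"
    using assms by (simp_all add: X Y)
  have "leading_form w (a + b) (x11 * y11 + x12 * y21) (S * T)"
    using x y by (intro leading_form_add_weight_less leading_form_mult weight_less_mult_left)
  moreover have "weight_less w (a + b) (x11 * y12 + x12 * y22)"
    using weight_less_mult_right[OF weight_le_if_leading_form[OF x(1)] y(2)]
      weight_less_mult_left[OF x(2) weight_le_if_weight_less[OF y(4)]]
    by (rule weight_less_add)
  moreover have "weight_le w (a + b) (x21 * y11 + x22 * y21)"
    using weight_le_mult[OF x(3) weight_le_if_leading_form[OF y(1)]]
      weight_le_mult[OF weight_le_if_weight_less[OF x(4)] y(3)]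
    by (rule weight_le_add)
  moreover have "weight_less w (a + b) (x21 * y12 + x22 * y22)"
    using weight_less_mult_right[OF x(3) y(2)] weight_less_mult_right[OF weight_le_if_weight_less[OF x(4)] y(4)]
    by (rule weight_less_add)
  ultimately show ?thesis
    by (simp add: X Y)
qed

lemma leading_form_m2tr_m2prod:
  assumes "\<And>k. leading_corner w c T (X (of_nat k))" and "n > 0"
  shows "leading_form w (c * n) (m2tr (m2prod X n)) (T ^ n)"
proof -
  have "leading_corner w (c * Suc k) (T ^ Suc k) (m2prod X (Suc k))" for k
  proof (induction k)
    case 0
    then show ?case using assms(1)[of 0] by simp
  next
    case (Suc k)
    then show ?case
      using leading_corner_m2mul[OF assms(1)[of "Suc k"] Suc] by (simp add: add.commute)
  qed
  then have "leading_corner w (c * n) (T ^ n) (m2prod X n)"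
    using assms(2) by (metis gr0_implies_Suc)
  then show ?thesis
    by (cases "m2prod X n") (simp add: leading_form_add_weight_less)
qed

end

section \<open>The gauge-transformed Lax matrix\<close>

text \<open>The gauge transform \<open>L(c(z+1))\<^sup>-\<^sup>1 A(z) L(c(z))\<close> with \<open>L(c) = [[1,0],[c,1]]\<close> and
  \<open>c(z) = f - tfg - t(z-1)\<close> (lemma \<open>Amat_gauge\<close>); in this gauge the top-weight terms sit in the
  (1,1) entry alone.\<close>

definition Agauge :: "'a::comm_ring_1 \<Rightarrow> 'a \<Rightarrow> 'a \<Rightarrow> 'a \<Rightarrow> 'a \<Rightarrow> 'a \<Rightarrow> 'a mat2" where
  "Agauge f g a1 a2 t z =
    (t*z - g*a1 + f*z - f*g*t + f*g^2 - f^2*g,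
     z - f*g,
     z^2 + a2*z - a1*z - a1*a2 - f*t*z - f*a2*t + f*g*z + f*g*a2 - f^2*z - f^2*a2,
     - f*z - f*a2)"

definition m2lower :: "'a::comm_ring_1 \<Rightarrow> 'a mat2" where
  "m2lower c = (1, 0, c, 1)"

lemma Amat_gauge:
  "m2mul (Amat 1 1 f g a1 a2 t z) (m2lower (f - t*f*g - t*(z - 1)))
    = m2mul (m2lower (f - t*f*g - t*z)) (Agauge f g a1 a2 t z)"
  by (simp add: Amat_def Agauge_def m2lower_def algebra_simps power2_eq_square)

lemma m2tr_m2prod_Amat_eq_Agauge:
  fixes f g a1 a2 t :: "'a::idom"
  assumes "of_nat n = (0::'a)"
  shows "m2tr (m2prod (Amat 1 1 f g a1 a2 t) n) = m2tr (m2prod (Agauge f g a1 a2 t) n)"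
  by (rule m2tr_m2prod_eq_if_intertwined[where R = "\<lambda>z. m2lower (f - t*f*g - t*(z - 1))"])
    (use Amat_gauge assms in \<open>simp_all add: m2lower_def\<close>)

lemma Agauge_T1_intertwine:
  fixes f g a1 a2 t z :: "'a::field"
  assumes "a1 - f*g \<noteq> 0" and "f \<noteq> 0"
    and u: "u = (a1 + a2) * f / (a1 - f*g) - f + g - t - a1 / f"
    and v: "v = (a2 + f*g) * f / (a1 - f*g)"
  shows "m2mul (Agauge u v (a1 + 1) a2 t z) (m2mul (v, 1, z + a2 - 1, 0) (f - u + v, 1, z - 1, 0))
    = m2mul (m2mul (v, 1, z + a2, 0) (f - u + v, 1, z, 0)) (Agauge f g a1 a2 t (z - 1))"
proof -
  define di fi where "di = inverse (a1 - f*g)" and "fi = inverse f"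
  have "di * (a1 - f*g) = 1" "fi * f = 1"
    "u = (a1 + a2) * f * di - f + g - t - a1 * fi" "v = (a2 + f*g) * f * di"
    using assms by (simp_all add: di_def fi_def divide_inverse)
  then show ?thesis
    unfolding Agauge_def
    by (simp only: m2mul.simps prod_eq_iff fst_conv snd_conv, intro conjI; algebra)
qed

lemma Agauge_T2_intertwine:
  fixes f g a1 a2 t z :: "'a::field"
  assumes "a2 + f*g \<noteq> 0" and "g \<noteq> 0"
    and u: "u = (a1 - f*g) * g / (a2 + f*g)"
    and v: "v = (a1 + a2) * g / (a2 + f*g) + f - g + t + a2 / g"
  shows "m2mul (Agauge u v a1 (a2 + 1) t z) (f + u + t, 1, z + a2, 0)
    = m2mul (f + u + t, 1, z + 1 + a2, 0) (Agauge f g a1 a2 t z)"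
proof -
  define di gi where "di = inverse (a2 + f*g)" and "gi = inverse g"
  have "di * (a2 + f*g) = 1" "gi * g = 1"
    "u = (a1 - f*g) * g * di" "v = (a1 + a2) * g * di + f - g + t + a2 * gi"
    using assms by (simp_all add: di_def gi_def divide_inverse)
  then show ?thesis
    unfolding Agauge_def
    by (simp only: m2mul.simps prod_eq_iff fst_conv snd_conv, intro conjI; algebra)
qed

lemma (in derivation) m2map_D_Agauge:
  assumes "D f = f * (2*g - f - t) - a1" "D g = g * (2*f - g + t) + a2"
    and "D a1 = 0" "D a2 = 0" "D t = 1" "D z = 0"
  defines "B \<equiv> \<lambda>z. (2*f + t, 1, z + a2 - 1, 0)"
  shows "m2map D (Agauge f g a1 a2 t z)
    = m2sub (m2mul (B (z + 1)) (Agauge f g a1 a2 t z)) (m2mul (Agauge f g a1 a2 t z) (B z))"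
  unfolding Agauge_def B_def
  by (simp add: D_add D_diff D_mult D_minus D_power2 assms) (simp add: algebra_simps power2_eq_square)

text \<open>Rewriting each monomial of an explicit polynomial into a single \<^const>\<open>Poly_Mapping.single\<close>
  exposes its exponent vector, so that \<open>simp\<close> can evaluate its weight.\<close>

lemmas monomial_as_single = Var_def Const_def mult_minus_left power2_eq_square mult_single

lemma leading_corner_Agauge_total_degree:
  "leading_corner monomial_degree 3 (vf * vg^2 - vf^2 * vg - vf * vg * vt)
     (Agauge vf vg va1 va2 vt (Const c) :: 'a::comm_ring_1 mpoly mat2)"
  unfolding Agauge_def leading_corner.simps
  by (intro conjI total_degree.leading_formI[where R = "vt * Const c - vg * va1 + vf * Const c"])
    (simp add: algebra_simps, unfold monomial_as_single,
     auto intro!: total_degree.weight_intros simp: total_degree.weight_add)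

lemma leading_corner_Agauge_degree_f:
  "leading_corner (\<lambda>m. Poly_Mapping.lookup m 0) 2 (- (vf^2 * vg))
     (Agauge vf vg va1 va2 vt (Const c) :: 'a::comm_ring_1 mpoly mat2)"
  unfolding Agauge_def leading_corner.simps
  by (intro conjI var_degree.leading_formI
        [where R = "vt * Const c - vg * va1 + vf * Const c - vf * vg * vt + vf * vg^2"])
    (simp add: algebra_simps, unfold monomial_as_single,
     auto intro!: var_degree.weight_intros simp: lookup_add lookup_single)

lemma leading_corner_Agauge_degree_g:
  "leading_corner (\<lambda>m. Poly_Mapping.lookup m 1) 2 (vf * vg^2)
     (Agauge vf vg va1 va2 vt (Const c) :: 'a::comm_ring_1 mpoly mat2)"
  unfolding Agauge_def leading_corner.simps
  by (intro conjI var_degree.leading_formI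
        [where R = "vt * Const c - vg * va1 + vf * Const c - vf * vg * vt - vf^2 * vg"])
    (simp add: algebra_simps, unfold monomial_as_single,
     auto intro!: var_degree.weight_intros simp: lookup_add lookup_single)

section \<open>The integral of motion\<close>

fun m2all :: "('a \<Rightarrow> bool) \<Rightarrow> 'a mat2 \<Rightarrow> bool" where
  "m2all P (a, b, c, d) \<longleftrightarrow> P a \<and> P b \<and> P c \<and> P d"

lemma prime_field_coeffs_Ip: "prime_field_coeffs (Ip p :: 'a::field mpoly)"
proof -
  let ?P = "prime_field_coeffs :: 'a mpoly \<Rightarrow> bool"
  have mul: "m2all ?P (m2mul X Y)" if "m2all ?P X" "m2all ?P Y" for X Y
    using that by (cases X; cases Y) (simp add: prime_field_coeffs_add prime_field_coeffs_mult)
  have "m2all ?P (Amat 1 1 vf vg va1 va2 vt (of_nat k))" for k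
    unfolding Amat_def
    by (intro mul) (simp_all add: prime_field_coeffs_add prime_field_coeffs_mult prime_field_coeffs_diff
      prime_field_coeffs_uminus prime_field_coeffs_Var prime_field_coeffs_of_nat prime_field_coeffs_one
      prime_field_coeffs_zero)
  then have "m2all ?P (m2prod (Amat 1 1 vf vg va1 va2 vt) p)"
    by (induction p) (simp_all add: mul m2one_def prime_field_coeffs_one prime_field_coeffs_zero)
  then show ?thesis
    by (cases "m2prod (Amat 1 1 vf vg va1 va2 (vt :: 'a mpoly)) p")
      (simp add: Ip_def prodA_eq_m2prod prime_field_coeffs_add)
qed

lemma of_nat_mpoly_eq_0: "of_nat n = (0::'a::comm_ring_1) \<Longrightarrow> of_nat n = (0::'a mpoly)"
  by (metis single_of_nat single_zero)

lemma of_nat_fract_eq_0: "of_nat n = (0::'a::field) \<Longrightarrow> of_nat n = (0::'a mpoly fract)"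
  by (metis RF.hom_of_nat RF.hom_zero of_nat_mpoly_eq_0)

lemma Ip_eq_m2tr_Agauge:
  "of_nat p = (0::'a::field) \<Longrightarrow> Ip p = m2tr (m2prod (Agauge vf vg va1 va2 vt) p :: 'a mpoly mat2)"
  unfolding Ip_def prodA_eq_m2prod by (rule m2tr_m2prod_Amat_eq_Agauge[OF of_nat_mpoly_eq_0])

lemma RF_Ip:
  "of_nat p = (0::'a::field) \<Longrightarrow>
    RF (Ip p :: 'a mpoly) = m2tr (m2prod (Agauge (RF vf) (RF vg) (RF va1) (RF va2) (RF vt)) p)"
  unfolding Ip_def prodA_eq_m2prod RF.hom_m2tr_m2prod_Amat
  by (rule m2tr_m2prod_Amat_eq_Agauge[OF of_nat_fract_eq_0])


lemma mpeval_RF_Const_Ip: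
  "mpeval (\<lambda>c. RF (Const c)) v (Ip p :: 'a::field mpoly)
    = m2tr (m2prod (Amat 1 1 (v 0) (v 1) (v 2) (v 3) (v 4)) p)"
proof -
  interpret ring_hom "mpeval (\<lambda>c. RF (Const c :: 'a mpoly)) v"
    by (rule ring_hom.ring_hom_mpeval[OF ring_hom_RF_Const])
  show ?thesis
    by (simp add: Ip_def prodA_eq_m2prod hom_m2tr_m2prod_Amat ring_hom.mpeval_Var[OF ring_hom_RF_Const])
qed

lemma T1_Ip:
  assumes "of_nat p = (0::'a::field)" and "p > 0"
  shows "T1 (Ip p :: 'a mpoly) = RF (Ip p)"
proof -
  let ?f = "RF vf :: 'a mpoly fract" and ?g = "RF vg" and ?a1 = "RF va1" and ?a2 = "RF va2"
    and ?t = "RF vt"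
  let ?R = "\<lambda>z. m2mul (gbar1, 1, z + ?a2 - 1, 0) (?f - fbar1 + gbar1, 1, z - 1, 0)"
  have "RF (va1 - vf * vg) \<noteq> 0"
    by (rule RF_nonzero_if_eval_nonzero[where v = "\<lambda>i. if i = 2 then 1 else 0"]) (simp add: eval.hom_simps)
  moreover have "RF vf \<noteq> 0"
    by (rule RF_nonzero_if_eval_nonzero[where v = "\<lambda>_. 1"]) simp
  moreover have "RF (1 - va2) \<noteq> 0"
    by (rule RF_nonzero_if_eval_nonzero[where v = "\<lambda>_. 0"]) (simp add: eval.hom_simps)
  ultimately have "?a1 - ?f * ?g \<noteq> 0" "?f \<noteq> 0" "m2det (?R 0) \<noteq> 0"
    by (simp_all add: RF.hom_simps algebra_simps)
  then have intertwine: "m2mul (Agauge fbar1 gbar1 (?a1 + 1) ?a2 ?t z) (?R z)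
      = m2mul (?R (z + 1)) (Agauge ?f ?g ?a1 ?a2 ?t (z - 1))" for z
    using Agauge_T1_intertwine[of ?a1 ?f ?g fbar1 ?a2 ?t gbar1 z]
    by (simp add: fbar1_def gbar1_def Let_def algebra_simps)
  have "T1 (Ip p :: 'a mpoly) = m2tr (m2prod (Amat 1 1 fbar1 gbar1 (?a1 + 1) ?a2 ?t) p)"
    by (simp add: T1_def mpeval_RF_Const_Ip)
  also have "\<dots> = m2tr (m2prod (Agauge fbar1 gbar1 (?a1 + 1) ?a2 ?t) p)"
    by (rule m2tr_m2prod_Amat_eq_Agauge[OF of_nat_fract_eq_0[OF assms(1)]])
  also have "\<dots> = m2tr (m2prod (\<lambda>z. Agauge ?f ?g ?a1 ?a2 ?t (z - 1)) p)"
    by (rule m2tr_m2prod_eq_if_intertwined[OF intertwine of_nat_fract_eq_0[OF assms(1)] \<open>m2det (?R 0) \<noteq> 0\<close>])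
  also have "\<dots> = m2tr (m2prod (Agauge ?f ?g ?a1 ?a2 ?t) p)"
    by (rule m2tr_m2prod_shift[OF of_nat_fract_eq_0[OF assms(1)] assms(2)])
  also have "\<dots> = RF (Ip p)"
    by (rule RF_Ip[OF assms(1), symmetric])
  finally show ?thesis .
qed

lemma T2_Ip:
  assumes "of_nat p = (0::'a::field)"
  shows "T2 (Ip p :: 'a mpoly) = RF (Ip p)"
proof -
  let ?f = "RF vf :: 'a mpoly fract" and ?g = "RF vg" and ?a1 = "RF va1" and ?a2 = "RF va2"
    and ?t = "RF vt"
  let ?R = "\<lambda>z. (?f + fbar2 + ?t, 1, z + ?a2, 0)"
  have "RF (va2 + vf * vg) \<noteq> 0"
    by (rule RF_nonzero_if_eval_nonzero[where v = "\<lambda>i. if i = 3 then 1 else 0"]) (simp add: eval.hom_simps)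
  moreover have "RF vg \<noteq> 0" "RF va2 \<noteq> 0"
    by (rule RF_nonzero_if_eval_nonzero[where v = "\<lambda>_. 1"], simp)+
  ultimately have "?a2 + ?f * ?g \<noteq> 0" "?g \<noteq> 0" "m2det (?R 0) \<noteq> 0"
    by (simp_all add: RF.hom_simps)
  then have intertwine: "m2mul (Agauge fbar2 gbar2 ?a1 (?a2 + 1) ?t z) (?R z)
      = m2mul (?R (z + 1)) (Agauge ?f ?g ?a1 ?a2 ?t z)" for z
    using Agauge_T2_intertwine[of ?a2 ?f ?g fbar2 ?a1 gbar2 ?t z]
    by (simp add: fbar2_def gbar2_def Let_def algebra_simps)
  have "T2 (Ip p :: 'a mpoly) = m2tr (m2prod (Amat 1 1 fbar2 gbar2 ?a1 (?a2 + 1) ?t) p)"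
    by (simp add: T2_def mpeval_RF_Const_Ip)
  also have "\<dots> = m2tr (m2prod (Agauge fbar2 gbar2 ?a1 (?a2 + 1) ?t) p)"
    by (rule m2tr_m2prod_Amat_eq_Agauge[OF of_nat_fract_eq_0[OF assms(1)]])
  also have "\<dots> = m2tr (m2prod (Agauge ?f ?g ?a1 ?a2 ?t) p)"
    by (rule m2tr_m2prod_eq_if_intertwined[OF intertwine of_nat_fract_eq_0[OF assms(1)] \<open>m2det (?R 0) \<noteq> 0\<close>])
  also have "\<dots> = RF (Ip p)"
    by (rule RF_Ip[OF assms(1), symmetric])
  finally show ?thesis .
qed

lemma Dt_Ip:
  assumes "of_nat p = (0::'a::field)"
  shows "Dt (Ip p :: 'a mpoly) = 0"
proof -
  interpret derivation "Dt :: 'a mpoly \<Rightarrow> 'a mpoly"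
    by (rule derivation_Dt)
  show ?thesis
    unfolding Ip_eq_m2tr_Agauge[OF assms]
  proof (rule D_m2tr_m2prod_eq_0[where B = "\<lambda>z. (2 * vf + vt, 1, z + va2 - 1, 0)"])
    show "m2map Dt (Agauge vf vg va1 va2 vt (of_nat k :: 'a mpoly))
      = m2sub (m2mul (2 * vf + vt, 1, of_nat k + 1 + va2 - 1, 0) (Agauge vf vg va1 va2 vt (of_nat k)))
          (m2mul (Agauge vf vg va1 va2 vt (of_nat k)) (2 * vf + vt, 1, of_nat k + va2 - 1, 0))" for k
      by (rule m2map_D_Agauge) (simp_all add: Dt_Var)
  qed (rule of_nat_mpoly_eq_0[OF assms])
qed

lemma Const_of_nat: "Const (of_nat k) = (of_nat k :: 'a::comm_ring_1 mpoly)"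
  by (simp add: Const_def)

lemma leading_form_Ip_total_degree:
  assumes "of_nat p = (0::'a::field)" and "p > 0"
  shows "leading_form monomial_degree (3 * p) (Ip p :: 'a mpoly) ((vf * vg^2 - vf^2 * vg - vf * vg * vt) ^ p)"
  unfolding Ip_eq_m2tr_Agauge[OF assms(1)]
proof (rule total_degree.leading_form_m2tr_m2prod[OF _ assms(2)])
  show "leading_corner monomial_degree 3 (vf * vg^2 - vf^2 * vg - vf * vg * vt)
    (Agauge vf vg va1 va2 vt (of_nat k :: 'a mpoly))" for k
    using leading_corner_Agauge_total_degree[of "of_nat k"] by (simp only: Const_of_nat)
qed

lemma neg_one_power_prime_char:
  assumes "prime p" and "of_nat p = (0::'a::comm_ring_1)"
  shows "(- 1 :: 'a) ^ p = - 1"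
proof (cases "p = 2")
  case True
  then have "(1::'a) + 1 = 0"
    using assms(2) by simp
  with True show ?thesis
    by (simp add: eq_neg_iff_add_eq_0)
next
  case False
  then have "odd p"
    using assms(1) prime_odd_nat prime_ge_2_nat[of p] by force
  then show ?thesis
    by simp
qed

lemma leading_form_Ip_degree_f:
  assumes "prime p" and "of_nat p = (0::'a::field)"
  shows "leading_form (\<lambda>m. Poly_Mapping.lookup m 0) (2 * p) (Ip p :: 'a mpoly) (- (vf^(2*p) * vg^p))"
proof -
  have "(- (vf^2 * vg)) ^ p = (- 1) ^ p * (vf^2 * vg :: 'a mpoly) ^ p"
    by (rule power_minus)
  also have "\<dots> = - ((vf^2 * vg) ^ p)"
    by (simp add: neg_one_power_prime_char[OF assms(1) of_nat_mpoly_eq_0[OF assms(2)]])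
  also have "(vf^2 * vg) ^ p = vf^(2*p) * vg^p"
    by (simp add: power_mult_distrib power_mult)
  finally have top: "(- (vf^2 * vg)) ^ p = - (vf^(2*p) * vg^p :: 'a mpoly)" .
  show ?thesis
    unfolding Ip_eq_m2tr_Agauge[OF assms(2)] top[symmetric]
    using leading_corner_Agauge_degree_f[of "of_nat _", unfolded Const_of_nat]
    by (rule var_degree.leading_form_m2tr_m2prod[OF _ prime_gt_0_nat[OF assms(1)]])
qed

lemma leading_form_Ip_degree_g:
  assumes "of_nat p = (0::'a::field)" and "p > 0"
  shows "leading_form (\<lambda>m. Poly_Mapping.lookup m 1) (2 * p) (Ip p :: 'a mpoly) (vf^p * vg^(2*p))"
proof -
  have top: "(vf * vg^2) ^ p = (vf^p * vg^(2*p) :: 'a mpoly)"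
    by (simp add: power_mult_distrib power_mult)
  show ?thesis
    unfolding Ip_eq_m2tr_Agauge[OF assms(1)] top[symmetric]
    using leading_corner_Agauge_degree_g[of "of_nat _", unfolded Const_of_nat]
    by (rule var_degree.leading_form_m2tr_m2prod[OF _ assms(2)])
qed

lemma tdeg_Ip:
  assumes "of_nat p = (0::'a::field)" and "p > 0"
  shows "tdeg (Ip p :: 'a mpoly) = 3 * p"
proof -
  have "(vf * vg^2 - vf^2 * vg - vf * vg * vt) ^ p \<noteq> (0 :: 'a mpoly)"
    by (rule nonzero_if_eval_nonzero[where v = "\<lambda>_. 1"]) (simp add: eval.hom_simps)
  then show ?thesis
    unfolding tdeg_def monomial_degree_def[abs_def, symmetric]
    by (rule total_degree.Max_weight_eq_if_leading_form[OF leading_form_Ip_total_degree[OF assms]])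
qed

lemma vdeg_Ip_f:
  assumes "prime p" and "of_nat p = (0::'a::field)"
  shows "vdeg 0 (Ip p :: 'a mpoly) = 2 * p"
proof -
  have "- (vf^(2*p) * vg^p) \<noteq> (0 :: 'a mpoly)"
    by (rule nonzero_if_eval_nonzero[where v = "\<lambda>_. 1"]) (simp add: eval.hom_simps)
  then show ?thesis
    unfolding vdeg_def
    by (rule var_degree.Max_weight_eq_if_leading_form[OF leading_form_Ip_degree_f[OF assms]])
qed

lemma vdeg_Ip_g:
  assumes "of_nat p = (0::'a::field)" and "p > 0"
  shows "vdeg 1 (Ip p :: 'a mpoly) = 2 * p"
proof -
  have "vf^p * vg^(2*p) \<noteq> (0 :: 'a mpoly)"
    by (rule nonzero_if_eval_nonzero[where v = "\<lambda>_. 1"]) (simp add: eval.hom_simps)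
  then show ?thesis
    unfolding vdeg_def
    by (rule var_degree.Max_weight_eq_if_leading_form[OF leading_form_Ip_degree_g[OF assms]])
qed

lemma Ip_eq_top_terms_plus_lower:
  assumes "prime p" and "of_nat p = (0::'a::field)"
  shows "\<exists>Q :: 'a mpoly. prime_field_coeffs Q \<and> vdeg 0 Q < 2 * p \<and> vdeg 1 Q < 2 * p
    \<and> Ip p = - (vf^(2*p) * vg^p) + vf^p * vg^(2*p) + Q"
proof -
  let ?F = "vf^(2*p) * vg^p :: 'a mpoly" and ?G = "vf^p * vg^(2*p) :: 'a mpoly"
  define Q where "Q = Ip p + ?F - ?G"
  have p0: "p > 0"
    using assms(1) prime_gt_0_nat by blast
  have weight_fg: "homogeneous (\<lambda>m. Poly_Mapping.lookup m i)
      (k * Poly_Mapping.lookup (Poly_Mapping.single 0 1) i + l * Poly_Mapping.lookup (Poly_Mapping.single 1 1) i)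
      (vf^k * vg^l :: 'a mpoly)" for i k l
    by (intro var_degree.homogeneous_mult var_degree.homogeneous_power var_degree.homogeneous_Var)
  have "weight_less (\<lambda>m. Poly_Mapping.lookup m 0) (2 * p) ?G"
    by (rule var_degree.weight_less_if_homogeneous[OF weight_fg]) (simp add: lookup_single p0)
  with leading_form_Ip_degree_f[OF assms] have "weight_less (\<lambda>m. Poly_Mapping.lookup m 0) (2 * p) Q"
    unfolding Q_def
    by (metis var_degree.weight_less_remainder var_degree.weight_less_uminus diff_minus_eq_add
        add_uminus_conv_diff)
  then have "vdeg 0 Q < 2 * p"
    unfolding vdeg_def by (rule var_degree.Max_weight_less) (simp add: p0)
  have "weight_less (\<lambda>m. Poly_Mapping.lookup m 1) (2 * p) ?F"
    by (rule var_degree.weight_less_if_homogeneous[OF weight_fg]) (simp add: lookup_single p0)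
  with leading_form_Ip_degree_g[OF assms(2) p0] have "weight_less (\<lambda>m. Poly_Mapping.lookup m 1) (2 * p) Q"
    unfolding Q_def by (metis var_degree.weight_less_remainder diff_add_eq)
  then have "vdeg 1 Q < 2 * p"
    unfolding vdeg_def by (rule var_degree.Max_weight_less) (simp add: p0)
  moreover have "prime_field_coeffs Q"
    unfolding Q_def
    by (intro prime_field_coeffs_diff prime_field_coeffs_add prime_field_coeffs_mult
        prime_field_coeffs_power prime_field_coeffs_Var prime_field_coeffs_Ip)
  ultimately show ?thesis
    using \<open>vdeg 0 Q < 2 * p\<close> by (intro exI[of _ Q]) (simp add: Q_def)
qed

theorem theorem2p2:
  fixes p :: nat
  assumes "prime p"
    and "CHAR('k::field) = p"
  shows "prime_field_coeffs (Ip p :: 'k mpoly)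
    \<and> T1 (Ip p :: 'k mpoly) = RF (Ip p)
    \<and> T2 (Ip p :: 'k mpoly) = RF (Ip p)
    \<and> Dt (Ip p :: 'k mpoly) = 0
    \<and> tdeg (Ip p :: 'k mpoly) = 3 * p
    \<and> vdeg 0 (Ip p :: 'k mpoly) = 2 * p
    \<and> vdeg 1 (Ip p :: 'k mpoly) = 2 * p
    \<and> (\<exists>Q :: 'k mpoly. prime_field_coeffs Q \<and> vdeg 0 Q < 2 * p \<and> vdeg 1 Q < 2 * p
         \<and> Ip p = - (vf ^ (2 * p) * vg ^ p) + vf ^ p * vg ^ (2 * p) + Q)"
proof -
  have char: "of_nat p = (0::'k)"
    using assms(2) by (metis of_nat_CHAR)
  have "p > 0"
    using assms(1) prime_gt_0_nat by blast
  then show ?thesis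
    using prime_field_coeffs_Ip T1_Ip[OF char] T2_Ip[OF char] Dt_Ip[OF char] tdeg_Ip[OF char]
      vdeg_Ip_f[OF assms(1) char] vdeg_Ip_g[OF char] Ip_eq_top_terms_plus_lower[OF assms(1) char]
    by blast
qed

end
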